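(* Let ${\bf X}_{\text{PROS}}=\{X_{[d_j]i}\}$ be a $\text{PROS}_{\boldsymbol{\alpha}}(n,L,s,D)$ sample of size $N=nL$ from a density $f$, let $K$ be a kernel as in the context and $h>0$ a bandwidth, and define $$\hat{f}_{\text{PROS}}(x)=\frac{1}{nLh}\sum_{i=1}^L\sum_{j=1}^n K\Big(\frac{x-X_{[d_j]i}}{h}\Big),\qquad \hat{f}_{\text{SRS}}(x)=\frac{1}{Nh}\sum_{k=1}^N K\Big(\frac{x-X_k}{h}\Big),$$ where $X_1,\dots,X_N$ are i.i.d. with density $f$. Then: (i) $\mathbb{E}[\hat{f}_{\text{PROS}}(x)]=\mathbb{E}[\hat{f}_{\text{SRS}}(x)]$; (ii) $\mathrm{var}(\hat{f}_{\text{PROS}}(x))=\mathrm{var}(\hat{f}_{\text{SRS}}(x))-\frac{1}{Nn}\sum_{j=1}^n(\mu_{K[d_j]}-\mu_K)^2$, where $\mu_{K[d_j]}=\mathbb{E}\big[\frac1hK\big(\frac{x-X_{[d_j]}}{h}\big)\big]$ and $\mu_K=\mathbb{E}\big[\frac1hK\big(\frac{x-X}{h}\big)\big]$, with $X_{[d_j]}$ having density $f_{[d_j]}$ and $X$ having density $f$; (iii) for fixed $x$, $\hat{f}_{\text{PROS}}(x)$ is asymptotically normally distributed with mean $\mathbb{E}[\hat{f}_{\text{PROS}}(x)]$ and variance $\mathrm{var}(\hat{f}_{\text{PROS}}(x))$ for large $L$.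
   Context: Let $f$ be a density with cdf $F$. Fix positive integers $s,n,L$ with $m=s/n$ an integer, and $D=\{d_1,\dots,d_n\}$ with $d_j=\{(j-1)m+1,\dots,jm\}$. Let $\boldsymbol{\alpha}=(\alpha_{d_j,d_h})$ be an $n\times n$ doubly stochastic matrix of misplacement probabilities. For $u=1,\dots,s$, $f_{(u:s)}(x)=\frac{s!}{(u-1)!(s-u)!}F(x)^{u-1}(1-F(x))^{s-u}f(x)$. A $\text{PROS}_{\boldsymbol{\alpha}}(n,L,s,D)$ sample (partially rank-ordered set sample with subsetting errors $\boldsymbol\alpha$) is a family of independent random variables $X_{[d_j]i}$, $j=1,\dots,n$, $i=1,\dots,L$, where $X_{[d_j]i}$ has density $f_{[d_j]}(x)=\frac1m\sum_{h=1}^n\sum_{u\in d_h}\alpha_{d_j,d_h}f_{(u:s)}(x)$. The kernel $K$ is a symmetric second-order kernel with $\int K=1$, $\int K^2<\infty$, $\int x^2K(x)dx<\infty$. *)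

theory Defs
  imports "HOL-Probability.Probability"
begin

definition cdf_of :: "(real \<Rightarrow> real) \<Rightarrow> real \<Rightarrow> real" where
  "cdf_of f x = (LINT t:{..x}|lborel. f t)"

definition ord_stat_density :: "(real \<Rightarrow> real) \<Rightarrow> nat \<Rightarrow> nat \<Rightarrow> real \<Rightarrow> real" where
  "ord_stat_density f s u x =
     fact s / (fact (u - 1) * fact (s - u)) * (cdf_of f x) ^ (u - 1) * (1 - cdf_of f x) ^ (s - u) * f x"

definition subset_d :: "nat \<Rightarrow> nat \<Rightarrow> nat set" where
  "subset_d m j = {(j - 1) * m + 1 .. j * m}"

definition doubly_stochastic :: "nat \<Rightarrow> (nat \<Rightarrow> nat \<Rightarrow> real) \<Rightarrow> bool" where
  "doubly_stochastic n a \<longleftrightarrow>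
     (\<forall>j\<in>{1..n}. \<forall>h\<in>{1..n}. 0 \<le> a j h) \<and>
     (\<forall>j\<in>{1..n}. (\<Sum>h=1..n. a j h) = 1) \<and>
     (\<forall>h\<in>{1..n}. (\<Sum>j=1..n. a j h) = 1)"

definition pros_density ::
  "(real \<Rightarrow> real) \<Rightarrow> nat \<Rightarrow> nat \<Rightarrow> (nat \<Rightarrow> nat \<Rightarrow> real) \<Rightarrow> nat \<Rightarrow> real \<Rightarrow> real" where
  "pros_density f s n a j x =
     (let m = s div n in
      (1 / real m) * (\<Sum>h=1..n. \<Sum>u\<in>subset_d m h. a j h * ord_stat_density f s u x))"

definition expect :: "'a measure \<Rightarrow> ('a \<Rightarrow> real) \<Rightarrow> real" where
  "expect M Z = integral\<^sup>L M Z"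

definition var :: "'a measure \<Rightarrow> ('a \<Rightarrow> real) \<Rightarrow> real" where
  "var M Z = expect M (\<lambda>\<omega>. (Z \<omega> - expect M Z)\<^sup>2)"

text \<open>PROS kernel density estimator; X j i is X_[d_j]i.\<close>
definition fhat_pros ::
  "(real \<Rightarrow> real) \<Rightarrow> real \<Rightarrow> nat \<Rightarrow> nat \<Rightarrow> (nat \<Rightarrow> nat \<Rightarrow> 'a \<Rightarrow> real) \<Rightarrow> real \<Rightarrow> 'a \<Rightarrow> real" where
  "fhat_pros K h n L X x \<omega> =
     1 / (real n * real L * h) * (\<Sum>i=1..L. \<Sum>j=1..n. K ((x - X j i \<omega>) / h))"

definition fhat_srs ::
  "(real \<Rightarrow> real) \<Rightarrow> real \<Rightarrow> nat \<Rightarrow> (nat \<Rightarrow> 'a \<Rightarrow> real) \<Rightarrow> real \<Rightarrow> 'a \<Rightarrow> real" where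
  "fhat_srs K h N Y x \<omega> = 1 / (real N * h) * (\<Sum>k=1..N. K ((x - Y k \<omega>) / h))"

end

theory Submission
  imports Defs
begin

text \<open>Both estimators are affine in a sum of independent centred kernel values
  \<open>K ((x - X) / h) - E K ((x - X) / h)\<close>. Since the columns of the doubly stochastic matrix
  sum to one and the order-statistic densities of a sample of size \<open>s\<close> add up to \<open>s f\<close>, the
  densities \<open>f_[d_j]\<close> average to \<open>f\<close>. Hence both estimators have the same mean, and the PROS
  variance falls short of the SRS variance by exactly the spread of the subset means
  \<open>\<mu>_K[d_j]\<close> around \<open>\<mu>_K\<close>. The \<open>L\<close> cycles of a PROS sample are independent and identically
  distributed, so the characteristic function of the centred PROS sum is the \<open>L\<close>-th power of
  that of a single cycle, and the classical central limit theorem gives the limit law.\<close>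

lemma cdf_of_nonneg:
  assumes "\<And>t. 0 \<le> f t"
  shows "0 \<le> cdf_of f y"
  unfolding cdf_of_def set_lebesgue_integral_def
  using assms by (intro Bochner_Integration.integral_nonneg) simp

lemma integrable_indicator_atMost_mult:
  fixes f :: "real \<Rightarrow> real"
  assumes "integrable lborel f"
  shows "integrable lborel (\<lambda>t. indicator {..y} t * f t :: real)"
  using integrable_mult_indicator[OF _ assms, of "{..y}"] by simp

lemma cdf_of_mono:
  assumes f_nonneg: "\<And>t. 0 \<le> f t" and f_int: "integrable lborel f" and "y \<le> z"
  shows "cdf_of f y \<le> cdf_of f z"
  unfolding cdf_of_def set_lebesgue_integral_def
  using assms integrable_indicator_atMost_mult[OF f_int]
  by (intro integral_mono) (auto simp: indicator_def)

lemma cdf_of_le_1: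
  assumes f_nonneg: "\<And>t. 0 \<le> f t" and f_int: "integrable lborel f"
    and f_one: "(LINT t|lborel. f t) = 1"
  shows "cdf_of f y \<le> 1"
proof -
  have "cdf_of f y \<le> (LINT t|lborel. f t)"
    unfolding cdf_of_def set_lebesgue_integral_def
    using assms integrable_indicator_atMost_mult[OF f_int]
    by (intro integral_mono) (auto simp: indicator_def)
  then show ?thesis using f_one by simp
qed

lemma borel_measurable_cdf_of [measurable]:
  assumes "\<And>t. 0 \<le> f t" and "integrable lborel f"
  shows "cdf_of f \<in> borel_measurable borel"
  using assms by (intro borel_measurable_mono monoI cdf_of_mono)

lemma sum_subset_d:
  "(\<Sum>j=1..n. \<Sum>u\<in>subset_d m j. g u) = (\<Sum>u=1..n * m. g u :: 'a :: comm_monoid_add)"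
proof (induction n)
  case 0
  then show ?case by simp
next
  case (Suc n)
  have "(\<Sum>u=1..n * m + m. g u) = (\<Sum>u=1..n * m. g u) + (\<Sum>u=n * m + 1..n * m + m. g u)"
    by (rule sum.ub_add_nat) simp
  then show ?case using Suc by (simp add: subset_d_def add.commute)
qed

text \<open>The binomial theorem for \<open>(F + (1 - F))^(s - 1)\<close> with \<open>F = cdf_of f y\<close>.\<close>

lemma sum_ord_stat_density:
  assumes "0 < s"
  shows "(\<Sum>u=1..s. ord_stat_density f s u y) = real s * f y"
proof -
  define F where "F = cdf_of f y"
  obtain r where s: "s = Suc r" using assms by (cases s) auto
  have "(\<Sum>u=1..s. ord_stat_density f s u y) = (\<Sum>k=0..r. ord_stat_density f s (Suc k) y)"
    unfolding s using sum.shift_bounds_cl_Suc_ivl[of "\<lambda>u. ord_stat_density f (Suc r) u y" 0 r]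
    by simp
  also have "\<dots> = (\<Sum>k=0..r. real s * (real (r choose k) * F ^ k * (1 - F) ^ (r - k)) * f y)"
  proof (rule sum.cong[OF refl])
    fix k assume "k \<in> {0..r}"
    then have "real (r choose k) = fact r / (fact k * fact (r - k))"
      by (simp add: binomial_fact)
    moreover have "(fact s :: real) = real s * fact r" unfolding s by simp
    ultimately show "ord_stat_density f s (Suc k) y
        = real s * (real (r choose k) * F ^ k * (1 - F) ^ (r - k)) * f y"
      unfolding ord_stat_density_def F_def s by simp
  qed
  also have "\<dots> = real s * (\<Sum>k=0..r. real (r choose k) * F ^ k * (1 - F) ^ (r - k)) * f y"
    by (simp add: sum_distrib_left sum_distrib_right mult.assoc)
  also have "(\<Sum>k=0..r. real (r choose k) * F ^ k * (1 - F) ^ (r - k)) = (F + (1 - F)) ^ r"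
    using binomial_ring[of F "1 - F" r] by (simp add: atLeast0AtMost ac_simps)
  finally show ?thesis by simp
qed

locale pros_densities =
  fixes f :: "real \<Rightarrow> real" and s n :: nat and a :: "nat \<Rightarrow> nat \<Rightarrow> real"
  assumes f_meas: "f \<in> borel_measurable lborel"
    and f_nonneg: "\<And>t. 0 \<le> f t"
    and f_int: "integrable lborel f"
    and f_one: "(LINT t|lborel. f t) = 1"
    and s_pos: "0 < s" and n_dvd: "n dvd s"
    and alpha: "doubly_stochastic n a"
begin

lemma n_pos: "0 < n"
  using n_dvd s_pos by (cases n) auto

lemma f_borel_measurable [measurable]: "f \<in> borel_measurable borel"
  using f_meas by simp

lemma ord_stat_density_nonneg: "0 \<le> ord_stat_density f s u t"
  unfolding ord_stat_density_def
  using cdf_of_nonneg[OF f_nonneg] cdf_of_le_1[OF f_nonneg f_int f_one] f_nonneg[of t]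
  by simp

lemma borel_measurable_pros_density [measurable]:
  "pros_density f s n a j \<in> borel_measurable borel"
proof -
  have [measurable]: "cdf_of f \<in> borel_measurable borel"
    using f_nonneg f_int by (rule borel_measurable_cdf_of)
  show ?thesis
    unfolding pros_density_def ord_stat_density_def Let_def by measurable
qed

lemma pros_density_nonneg: "j \<in> {1..n} \<Longrightarrow> 0 \<le> pros_density f s n a j t"
  using alpha ord_stat_density_nonneg unfolding pros_density_def Let_def doubly_stochastic_def
  by (auto intro!: divide_nonneg_nonneg sum_nonneg mult_nonneg_nonneg)

lemma sum_pros_density: "(\<Sum>j=1..n. pros_density f s n a j t) = real n * f t"
proof -
  define m where "m = s div n"
  have s_eq: "s = n * m" using n_dvd unfolding m_def by simp
  have m_pos: "0 < m" using s_pos s_eq by (cases m) auto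
  have "(\<Sum>j=1..n. pros_density f s n a j t)
      = (1 / real m) * (\<Sum>j=1..n. \<Sum>h=1..n. \<Sum>u\<in>subset_d m h. a j h * ord_stat_density f s u t)"
    unfolding pros_density_def Let_def m_def[symmetric] by (simp add: sum_distrib_left)
  also have "(\<Sum>j=1..n. \<Sum>h=1..n. \<Sum>u\<in>subset_d m h. a j h * ord_stat_density f s u t)
      = (\<Sum>h=1..n. \<Sum>u\<in>subset_d m h. \<Sum>j=1..n. a j h * ord_stat_density f s u t)"
    by (subst sum.swap) (intro sum.cong refl sum.swap)
  also have "\<dots> = (\<Sum>h=1..n. \<Sum>u\<in>subset_d m h. ord_stat_density f s u t)"
    using alpha by (simp add: sum_distrib_right[symmetric] doubly_stochastic_def)
  also have "\<dots> = (\<Sum>u=1..s. ord_stat_density f s u t)"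
    using sum_subset_d[where g="\<lambda>u. ord_stat_density f s u t" and n=n and m=m] s_eq by simp
  finally show ?thesis
    using sum_ord_stat_density[OF s_pos] m_pos by (simp add: s_eq)
qed

lemma pros_density_le: "j \<in> {1..n} \<Longrightarrow> pros_density f s n a j t \<le> real n * f t"
  unfolding sum_pros_density[symmetric, of t]
  by (rule member_le_sum) (auto intro: pros_density_nonneg)

lemma integrable_pros_density_mult:
  assumes j: "j \<in> {1..n}" and [measurable]: "\<phi> \<in> borel_measurable borel"
    and int: "integrable lborel (\<lambda>t. f t * \<phi> t)"
  shows "integrable lborel (\<lambda>t. pros_density f s n a j t * \<phi> t)"
proof (rule Bochner_Integration.integrable_bound)
  show "integrable lborel (\<lambda>t. real n * (f t * \<phi> t))" using int by simp
  show "AE t in lborel. norm (pros_density f s n a j t * \<phi> t) \<le> norm (real n * (f t * \<phi> t))"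
    using pros_density_le[OF j] pros_density_nonneg[OF j] f_nonneg
    by (intro AE_I2) (auto simp: abs_mult mult.assoc[symmetric] intro!: mult_right_mono)
qed simp

lemma sum_integral_pros_density_mult:
  assumes [measurable]: "\<phi> \<in> borel_measurable borel"
    and int: "integrable lborel (\<lambda>t. f t * \<phi> t)"
  shows "(\<Sum>j=1..n. (LINT t|lborel. pros_density f s n a j t * \<phi> t)) = real n * (LINT t|lborel. f t * \<phi> t)"
proof -
  have "(\<Sum>j=1..n. (LINT t|lborel. pros_density f s n a j t * \<phi> t))
      = (LINT t|lborel. (\<Sum>j=1..n. pros_density f s n a j t * \<phi> t))"
    using integrable_pros_density_mult[OF _ _ int] by (simp add: Bochner_Integration.integral_sum)
  also have "\<dots> = (LINT t|lborel. real n * (f t * \<phi> t))"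
    by (simp only: sum_distrib_right[symmetric] sum_pros_density mult.assoc)
  finally show ?thesis by simp
qed

end

lemma sum_power2_diff_mean:
  fixes b :: "'i \<Rightarrow> real"
  assumes "(\<Sum>j\<in>A. b j) = real (card A) * c"
  shows "(\<Sum>j\<in>A. (b j - c)\<^sup>2) = (\<Sum>j\<in>A. (b j)\<^sup>2) - real (card A) * c\<^sup>2"
proof -
  have "(\<Sum>j\<in>A. (b j - c)\<^sup>2) = (\<Sum>j\<in>A. (b j)\<^sup>2 - 2 * c * b j + c\<^sup>2)"
    by (intro sum.cong refl) (simp add: power2_diff algebra_simps)
  also have "\<dots> = (\<Sum>j\<in>A. (b j)\<^sup>2) - 2 * c * (\<Sum>j\<in>A. b j) + real (card A) * c\<^sup>2"
    by (simp add: sum.distrib sum_subtractf sum_distrib_left)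
  finally show ?thesis using assms by (simp add: power2_eq_square)
qed

lemma integrable_mult_of_square:
  fixes w u :: "'a \<Rightarrow> real"
  assumes [measurable]: "w \<in> borel_measurable M" "u \<in> borel_measurable M"
    and w_nonneg: "\<And>t. 0 \<le> w t" and "integrable M w" "integrable M (\<lambda>t. w t * (u t)\<^sup>2)"
  shows "integrable M (\<lambda>t. w t * u t)"
proof (rule Bochner_Integration.integrable_bound)
  show "integrable M (\<lambda>t. w t + w t * (u t)\<^sup>2)" using assms by simp
  have "w t * \<bar>u t\<bar> \<le> w t * (1 + (u t)\<^sup>2)" for t
    using zero_le_power2[of "\<bar>u t\<bar> - 1"] w_nonneg[of t]
    by (intro mult_left_mono) (simp_all add: power2_diff)
  then show "AE t in M. norm (w t * u t) \<le> norm (w t + w t * (u t)\<^sup>2)"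
    using w_nonneg by (intro AE_I2) (simp add: abs_mult distrib_left)
qed simp

lemma (in prob_space) expectation_square_sum_indep:
  fixes V :: "'i \<Rightarrow> 'a \<Rightarrow> real"
  assumes "finite I" "indep_vars (\<lambda>_. borel) V I"
    and "\<And>i. i \<in> I \<Longrightarrow> integrable M (V i)"
    and "\<And>i. i \<in> I \<Longrightarrow> integrable M (\<lambda>\<omega>. (V i \<omega>)\<^sup>2)"
    and "\<And>i. i \<in> I \<Longrightarrow> expectation (V i) = 0"
  shows "integrable M (\<lambda>\<omega>. (\<Sum>i\<in>I. V i \<omega>)\<^sup>2) \<and>
    expectation (\<lambda>\<omega>. (\<Sum>i\<in>I. V i \<omega>)\<^sup>2) = (\<Sum>i\<in>I. expectation (\<lambda>\<omega>. (V i \<omega>)\<^sup>2))"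
  using assms
proof (induction I rule: finite_induct)
  case empty
  then show ?case by simp
next
  case (insert y F)
  let ?S = "\<lambda>\<omega>. \<Sum>i\<in>F. V i \<omega>"
  note IH = insert.IH[OF indep_vars_subset[OF insert.prems(1) subset_insertI] insert.prems(2-4)]
  have iv: "indep_var borel (V y) borel ?S"
    by (rule indep_vars_sum[OF insert.hyps insert.prems(1)])
  have int: "integrable M (V y)" "integrable M ?S"
    using insert.prems(2) by auto
  have cross: "integrable M (\<lambda>\<omega>. V y \<omega> * ?S \<omega>)" "expectation (\<lambda>\<omega>. V y \<omega> * ?S \<omega>) = 0"
    using indep_var_integrable[OF iv int] indep_var_lebesgue_integral[OF iv int] insert.prems(4)
    by simp_all
  have sq: "(\<lambda>\<omega>. (\<Sum>i\<in>insert y F. V i \<omega>)\<^sup>2)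
      = (\<lambda>\<omega>. (V y \<omega>)\<^sup>2 + 2 * (V y \<omega> * ?S \<omega>) + (?S \<omega>)\<^sup>2)"
    using insert.hyps by (auto simp: power2_sum)
  show ?case
    unfolding sq using insert.hyps insert.prems(3) cross IH by simp
qed

lemma (in prob_space) centered_distributed_moments:
  fixes Z :: "'a \<Rightarrow> real" and g \<phi> :: "real \<Rightarrow> real"
  assumes D: "distributed M lborel Z (\<lambda>t. ennreal (g t))" and g_nonneg: "\<And>t. 0 \<le> g t"
    and [measurable]: "\<phi> \<in> borel_measurable borel"
    and int1: "integrable lborel (\<lambda>t. g t * \<phi> t)"
    and int2: "integrable lborel (\<lambda>t. g t * (\<phi> t)\<^sup>2)"
  defines "V \<omega> \<equiv> \<phi> (Z \<omega>) - (LINT t|lborel. g t * \<phi> t)"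
  shows "integrable M V" "expectation V = 0" "integrable M (\<lambda>\<omega>. (V \<omega>)\<^sup>2)"
    "expectation (\<lambda>\<omega>. (V \<omega>)\<^sup>2)
      = (LINT t|lborel. g t * (\<phi> t)\<^sup>2) - (LINT t|lborel. g t * \<phi> t)\<^sup>2"
proof -
  have g: "\<And>t. t \<in> space lborel \<Longrightarrow> 0 \<le> g t" using g_nonneg by simp
  have Z: "integrable M (\<lambda>\<omega>. \<phi> (Z \<omega>))" "integrable M (\<lambda>\<omega>. (\<phi> (Z \<omega>))\<^sup>2)"
    "expectation (\<lambda>\<omega>. \<phi> (Z \<omega>)) = (LINT t|lborel. g t * \<phi> t)"
    "expectation (\<lambda>\<omega>. (\<phi> (Z \<omega>))\<^sup>2) = (LINT t|lborel. g t * (\<phi> t)\<^sup>2)"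
    using distributed_integrable[OF D _ g, of \<phi>] distributed_integrable[OF D _ g, of "\<lambda>t. (\<phi> t)\<^sup>2"]
      distributed_integral[OF D _ g, of \<phi>] distributed_integral[OF D _ g, of "\<lambda>t. (\<phi> t)\<^sup>2"]
      int1 int2
    by simp_all
  have sq: "(\<lambda>\<omega>. (V \<omega>)\<^sup>2) = (\<lambda>\<omega>. (\<phi> (Z \<omega>))\<^sup>2
      - 2 * (LINT t|lborel. g t * \<phi> t) * \<phi> (Z \<omega>) + (LINT t|lborel. g t * \<phi> t)\<^sup>2)"
    unfolding V_def by (auto simp: power2_diff)
  show "integrable M V" "expectation V = 0"
    unfolding V_def[abs_def] using Z by (simp_all add: prob_space)
  show "integrable M (\<lambda>\<omega>. (V \<omega>)\<^sup>2)"
    "expectation (\<lambda>\<omega>. (V \<omega>)\<^sup>2)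
      = (LINT t|lborel. g t * (\<phi> t)\<^sup>2) - (LINT t|lborel. g t * \<phi> t)\<^sup>2"
    unfolding sq using Z by (simp_all add: prob_space power2_eq_square)
qed

lemma (in prob_space) expect_var_affine_mean_zero:
  assumes "integrable M S" "expectation S = 0"
  shows "expect M (\<lambda>\<omega>. c * S \<omega> + b) = b"
    "var M (\<lambda>\<omega>. c * S \<omega> + b) = c\<^sup>2 * expectation (\<lambda>\<omega>. (S \<omega>)\<^sup>2)"
  using assms by (simp_all add: expect_def var_def prob_space power_mult_distrib)

lemma (in product_prob_space) indep_vars_components:
  "P.indep_vars M (\<lambda>i \<omega>. \<omega> i) I"
proof (cases "I = {}")
  case True
  then show ?thesis unfolding P.indep_vars_def2 P.indep_sets_def by auto
next
  case False
  have "distr (PiM I M) (PiM I M) (\<lambda>\<omega>. \<lambda>i\<in>I. \<omega> i) = distr (PiM I M) (PiM I M) (\<lambda>\<omega>. \<omega>)"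
    by (intro distr_cong) (auto simp: space_PiM)
  also have "\<dots> = (\<Pi>\<^sub>M i\<in>I. distr (PiM I M) (M i) (\<lambda>\<omega>. \<omega> i))"
    by (simp add: PiM_component cong: PiM_cong)
  finally show ?thesis
    using False by (subst P.indep_vars_iff_distr_eq_PiM') auto
qed

lemma char_distr_divide:
  assumes "Z \<in> borel_measurable N"
  shows "char (distr N borel (\<lambda>\<omega>. Z \<omega> / q)) t = char (distr N borel Z) (t / q)"
  using assms unfolding char_def by (simp add: integral_distr mult.commute)

text \<open>Only the laws \<open>N n\<close> matter: they are realised on the infinite product of copies of
  \<open>\<mu>\<close>, where the classical central limit theorem applies, and identified there by Levy's
  uniqueness theorem.\<close>

theorem central_limit_theorem_char_power:
  fixes \<mu> :: "real measure" and N :: "nat \<Rightarrow> real measure" and \<sigma> :: real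
  assumes \<mu>: "real_distribution \<mu>" and mean: "integrable \<mu> (\<lambda>x. x)" "(\<integral>x. x \<partial>\<mu>) = 0"
    and var: "integrable \<mu> (\<lambda>x. x\<^sup>2)" "(\<integral>x. x\<^sup>2 \<partial>\<mu>) = \<sigma>\<^sup>2" and \<sigma>_pos: "0 < \<sigma>"
    and N: "\<And>n. real_distribution (N n)"
    and char_N: "\<And>n t. char (N n) t = char \<mu> (t / sqrt (n * \<sigma>\<^sup>2)) ^ n"
  shows "weak_conv_m N std_normal_distribution"
proof -
  interpret \<mu>: real_distribution \<mu> by (rule \<mu>)
  interpret product_prob_space "\<lambda>_. \<mu>" "UNIV :: nat set"
    by unfold_locales
  let ?P = "PiM (UNIV :: nat set) (\<lambda>_. \<mu>)"
  have law: "distr ?P borel (\<lambda>\<omega>. \<omega> i) = \<mu>" for i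
  proof -
    have "distr ?P borel (\<lambda>\<omega>. \<omega> i) = distr ?P \<mu> (\<lambda>\<omega>. \<omega> i)"
      by (rule distr_cong) simp_all
    then show ?thesis by (simp add: PiM_component)
  qed
  have indep: "P.indep_vars (\<lambda>_. borel) (\<lambda>i \<omega>. \<omega> i) UNIV"
    using P.indep_vars_compose2[OF indep_vars_components, of "\<lambda>_ x. x"] by simp
  have meas[measurable]: "(\<lambda>\<omega>. \<omega> i) \<in> borel_measurable ?P" for i
    using indep unfolding P.indep_vars_def2 by simp
  have "weak_conv_m (\<lambda>n. distr ?P borel (\<lambda>\<omega>. (\<Sum>i<n. \<omega> i) / sqrt (n * \<sigma>\<^sup>2))) std_normal_distribution"
  proof (rule P.central_limit_theorem_zero_mean[OF indep _ \<sigma>_pos _ _ law])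
    have moments: "integrable ?P (\<lambda>\<omega>. (\<omega> i) ^ k) \<longleftrightarrow> integrable \<mu> (\<lambda>x. x ^ k)"
      "P.expectation (\<lambda>\<omega>. (\<omega> i) ^ k) = (\<integral>x. x ^ k \<partial>\<mu>)" for i k
      using integrable_distr_eq[of "\<lambda>\<omega>. \<omega> i" ?P borel "\<lambda>x. x ^ k"]
        integral_distr[of "\<lambda>\<omega>. \<omega> i" ?P borel "\<lambda>x. x ^ k"]
      by (simp_all add: law)
    show "P.expectation (\<lambda>\<omega>. \<omega> i) = 0" for i
      using moments(2)[of i 1] mean(2) by simp
    show "integrable ?P (\<lambda>\<omega>. (\<omega> i)\<^sup>2)" for i
      using moments(1)[of i 2] var(1) by simp
    then show "P.variance (\<lambda>\<omega>. \<omega> i) = \<sigma>\<^sup>2" for i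
      using moments(2)[of i 1] moments(2)[of i 2] mean(2) var(2) by simp
  qed
  moreover have "N = (\<lambda>n. distr ?P borel (\<lambda>\<omega>. (\<Sum>i<n. \<omega> i) / sqrt (n * \<sigma>\<^sup>2)))"
  proof (rule ext, rule Levy_uniqueness[OF N])
    fix n
    show "real_distribution (distr ?P borel (\<lambda>\<omega>. (\<Sum>i<n. \<omega> i) / sqrt (n * \<sigma>\<^sup>2)))"
      by (rule P.real_distribution_distr) simp
    have "char (distr ?P borel (\<lambda>\<omega>. (\<Sum>i<n. \<omega> i) / sqrt (n * \<sigma>\<^sup>2))) t = char \<mu> (t / sqrt (n * \<sigma>\<^sup>2)) ^ n" for t
      using P.char_distr_sum[OF P.indep_vars_subset[OF indep subset_UNIV, of "{..<n}"]]
      by (simp add: char_distr_divide law)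
    then show "char (N n) = char (distr ?P borel (\<lambda>\<omega>. (\<Sum>i<n. \<omega> i) / sqrt (n * \<sigma>\<^sup>2)))"
      by (simp add: char_N fun_eq_iff)
  qed
  ultimately show ?thesis by simp
qed

locale pros_kde = pros_densities f s n a
  for f :: "real \<Rightarrow> real" and s n :: nat and a :: "nat \<Rightarrow> nat \<Rightarrow> real" +
  fixes K :: "real \<Rightarrow> real" and h x :: real
    and M :: "nat \<Rightarrow> 'a measure" and X :: "nat \<Rightarrow> nat \<Rightarrow> nat \<Rightarrow> 'a \<Rightarrow> real"
    and M' :: "nat \<Rightarrow> 'b measure" and Y :: "nat \<Rightarrow> nat \<Rightarrow> 'b \<Rightarrow> real"
  assumes K_int: "integrable lborel K"
    and h_pos: "0 < h"
    and var_fin: "integrable lborel (\<lambda>t. (K ((x - t) / h))\<^sup>2 * f t)"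
    and M_prob: "\<And>L. prob_space (M L)"
    and X_indep: "\<And>L. prob_space.indep_vars (M L) (\<lambda>_. borel) (\<lambda>(j, i). X L j i) ({1..n} \<times> {1..L})"
    and X_distr: "\<And>L j i. j \<in> {1..n} \<Longrightarrow> i \<in> {1..L} \<Longrightarrow>
        distributed (M L) lborel (X L j i) (\<lambda>t. ennreal (pros_density f s n a j t))"
    and M'_prob: "\<And>L. prob_space (M' L)"
    and Y_indep: "\<And>L. prob_space.indep_vars (M' L) (\<lambda>_. borel) (Y L) {1..n * L}"
    and Y_distr: "\<And>L k. k \<in> {1..n * L} \<Longrightarrow> distributed (M' L) lborel (Y L k) (\<lambda>t. ennreal (f t))"
begin

definition kernel :: "real \<Rightarrow> real" where
  "kernel t = K ((x - t) / h)"

text \<open>In the notation of the paper, \<open>mean_pros j = h \<mu>_K[d_j]\<close> and \<open>mean_srs = h \<mu>_K\<close>;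
  \<open>row_variance\<close> is the variance of the kernel values summed over one cycle of the sample.\<close>

definition mean_pros :: "nat \<Rightarrow> real" where
  "mean_pros j = (LINT t|lborel. pros_density f s n a j t * kernel t)"

definition sqmean_pros :: "nat \<Rightarrow> real" where
  "sqmean_pros j = (LINT t|lborel. pros_density f s n a j t * (kernel t)\<^sup>2)"

definition mean_srs :: real where
  "mean_srs = (LINT t|lborel. f t * kernel t)"

definition sqmean_srs :: real where
  "sqmean_srs = (LINT t|lborel. f t * (kernel t)\<^sup>2)"

definition row_variance :: real where
  "row_variance = (\<Sum>j=1..n. sqmean_pros j - (mean_pros j)\<^sup>2)"

definition pros_centered :: "nat \<Rightarrow> nat \<Rightarrow> nat \<Rightarrow> 'a \<Rightarrow> real" where
  "pros_centered L j i \<omega> = kernel (X L j i \<omega>) - mean_pros j"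

definition pros_sum :: "nat \<Rightarrow> 'a \<Rightarrow> real" where
  "pros_sum L \<omega> = (\<Sum>p\<in>{1..n} \<times> {1..L}. pros_centered L (fst p) (snd p) \<omega>)"

definition srs_sum :: "nat \<Rightarrow> 'b \<Rightarrow> real" where
  "srs_sum L \<omega> = (\<Sum>k=1..n * L. kernel (Y L k \<omega>) - mean_srs)"

lemma kernel_measurable [measurable]: "kernel \<in> borel_measurable borel"
proof -
  have [measurable]: "K \<in> borel_measurable borel"
    using borel_measurable_integrable[OF K_int] by simp
  show ?thesis unfolding kernel_def by measurable
qed

lemma integrable_f_kernel_sq: "integrable lborel (\<lambda>t. f t * (kernel t)\<^sup>2)"
  using var_fin unfolding kernel_def by (simp only: mult.commute[of "f _"])

lemma integrable_f_kernel: "integrable lborel (\<lambda>t. f t * kernel t)"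
  using f_nonneg f_int integrable_f_kernel_sq by (rule integrable_mult_of_square[rotated 2]) simp_all

lemma sum_mean_pros: "(\<Sum>j=1..n. mean_pros j) = real n * mean_srs"
  unfolding mean_pros_def mean_srs_def
  by (rule sum_integral_pros_density_mult[OF kernel_measurable integrable_f_kernel])

lemma sum_sqmean_pros: "(\<Sum>j=1..n. sqmean_pros j) = real n * sqmean_srs"
  unfolding sqmean_pros_def sqmean_srs_def
  by (rule sum_integral_pros_density_mult[OF _ integrable_f_kernel_sq]) simp

lemma pros_centered_moments:
  assumes "j \<in> {1..n}" "i \<in> {1..L}"
  shows "integrable (M L) (pros_centered L j i)"
    "integral\<^sup>L (M L) (pros_centered L j i) = 0"
    "integrable (M L) (\<lambda>\<omega>. (pros_centered L j i \<omega>)\<^sup>2)"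
    "(\<integral>\<omega>. (pros_centered L j i \<omega>)\<^sup>2 \<partial>M L) = sqmean_pros j - (mean_pros j)\<^sup>2"
  using prob_space.centered_distributed_moments[OF M_prob X_distr[OF assms] pros_density_nonneg[OF assms(1)]
      kernel_measurable integrable_pros_density_mult[OF assms(1) _ integrable_f_kernel]
      integrable_pros_density_mult[OF assms(1) _ integrable_f_kernel_sq]]
  unfolding pros_centered_def[abs_def] mean_pros_def sqmean_pros_def by simp_all

lemma indep_vars_pros_centered:
  "prob_space.indep_vars (M L) (\<lambda>_. borel) (\<lambda>p. pros_centered L (fst p) (snd p)) ({1..n} \<times> {1..L})"
proof -
  interpret prob_space "M L" by (rule M_prob)
  have "indep_vars (\<lambda>_. borel)
      (\<lambda>p \<omega>. (\<lambda>t. kernel t - mean_pros (fst p)) ((\<lambda>(j, i). X L j i) p \<omega>)) ({1..n} \<times> {1..L})"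
    by (rule indep_vars_compose2[OF X_indep]) simp
  then show ?thesis by (simp add: pros_centered_def[abs_def] split_beta)
qed

lemma sum_over_cells: "(\<Sum>i=1..L. \<Sum>j=1..n. F j i) = (\<Sum>p\<in>{1..n} \<times> {1..L}. F (fst p) (snd p) :: real)"
  by (subst sum.swap) (simp add: sum.cartesian_product split_beta)

lemma pros_sum_moments:
  shows "integrable (M L) (pros_sum L)" "integral\<^sup>L (M L) (pros_sum L) = 0"
    "integrable (M L) (\<lambda>\<omega>. (pros_sum L \<omega>)\<^sup>2)"
    "(\<integral>\<omega>. (pros_sum L \<omega>)\<^sup>2 \<partial>M L) = real L * row_variance"
proof -
  interpret prob_space "M L" by (rule M_prob)
  have cell: "fst p \<in> {1..n}" "snd p \<in> {1..L}" if "p \<in> {1..n} \<times> {1..L}" for p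
    using that by auto
  note moments = pros_centered_moments[OF cell]
  have sq: "integrable (M L) (\<lambda>\<omega>. (pros_sum L \<omega>)\<^sup>2) \<and>
      (\<integral>\<omega>. (pros_sum L \<omega>)\<^sup>2 \<partial>M L)
        = (\<Sum>p\<in>{1..n} \<times> {1..L}. \<integral>\<omega>. (pros_centered L (fst p) (snd p) \<omega>)\<^sup>2 \<partial>M L)"
    unfolding pros_sum_def[abs_def]
    using expectation_square_sum_indep[OF _ indep_vars_pros_centered moments(1,3,2)] by simp
  show "integrable (M L) (pros_sum L)" "integral\<^sup>L (M L) (pros_sum L) = 0"
    unfolding pros_sum_def[abs_def] using moments(1,2)
    by (simp_all add: Bochner_Integration.integral_sum)
  show "integrable (M L) (\<lambda>\<omega>. (pros_sum L \<omega>)\<^sup>2)" using sq ..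
  have "(\<Sum>p\<in>{1..n} \<times> {1..L}. \<integral>\<omega>. (pros_centered L (fst p) (snd p) \<omega>)\<^sup>2 \<partial>M L)
      = (\<Sum>p\<in>{1..n} \<times> {1..L}. sqmean_pros (fst p) - (mean_pros (fst p))\<^sup>2)"
    using moments(4) by (intro sum.cong refl) simp
  also have "\<dots> = real L * row_variance"
    using sum_over_cells[of "\<lambda>j i. sqmean_pros j - (mean_pros j)\<^sup>2" L]
    by (simp add: row_variance_def)
  finally show "(\<integral>\<omega>. (pros_sum L \<omega>)\<^sup>2 \<partial>M L) = real L * row_variance"
    using sq by simp
qed

lemma fhat_pros_eq:
  assumes "1 \<le> L"
  shows "fhat_pros K h n L (X L) x \<omega> = 1 / (real n * real L * h) * pros_sum L \<omega> + mean_srs / h"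
proof -
  have "fhat_pros K h n L (X L) x \<omega>
      = 1 / (real n * real L * h) * (\<Sum>p\<in>{1..n} \<times> {1..L}. kernel (X L (fst p) (snd p) \<omega>))"
    unfolding fhat_pros_def kernel_def using sum_over_cells[of "\<lambda>j i. K ((x - X L j i \<omega>) / h)" L]
    by simp
  also have "(\<Sum>p\<in>{1..n} \<times> {1..L}. kernel (X L (fst p) (snd p) \<omega>))
      = pros_sum L \<omega> + real L * (real n * mean_srs)"
    unfolding pros_sum_def pros_centered_def
    using sum_over_cells[of "\<lambda>j i. mean_pros j" L] sum_mean_pros by (simp add: sum_subtractf)
  finally show ?thesis
    using assms n_pos h_pos by (simp add: field_simps)
qed

lemma expect_fhat_pros:
  assumes "1 \<le> L"
  shows "expect (M L) (fhat_pros K h n L (X L) x) = mean_srs / h"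
  unfolding fhat_pros_eq[OF assms, abs_def]
  by (rule prob_space.expect_var_affine_mean_zero[OF M_prob pros_sum_moments(1,2)])

lemma var_fhat_pros:
  assumes "1 \<le> L"
  shows "var (M L) (fhat_pros K h n L (X L) x) = row_variance / ((real n)\<^sup>2 * real L * h\<^sup>2)"
  unfolding fhat_pros_eq[OF assms, abs_def]
    prob_space.expect_var_affine_mean_zero[OF M_prob pros_sum_moments(1,2)] pros_sum_moments(4)
  using assms by (simp add: power2_eq_square)

lemma srs_sum_moments:
  shows "integrable (M' L) (srs_sum L)" "integral\<^sup>L (M' L) (srs_sum L) = 0"
    "(\<integral>\<omega>. (srs_sum L \<omega>)\<^sup>2 \<partial>M' L) = real (n * L) * (sqmean_srs - mean_srs\<^sup>2)"
proof -
  interpret prob_space "M' L" by (rule M'_prob)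
  define U where "U k \<omega> = kernel (Y L k \<omega>) - mean_srs" for k \<omega>
  note moments = centered_distributed_moments[OF Y_distr f_nonneg kernel_measurable
      integrable_f_kernel integrable_f_kernel_sq, folded mean_srs_def sqmean_srs_def, folded U_def]
  have indep: "indep_vars (\<lambda>_. borel) U {1..n * L}"
    unfolding U_def using indep_vars_compose2[OF Y_indep, of "\<lambda>_ t. kernel t - mean_srs"] by simp
  have sum_U: "srs_sum L = (\<lambda>\<omega>. \<Sum>k=1..n * L. U k \<omega>)"
    unfolding srs_sum_def U_def ..
  show "integrable (M' L) (srs_sum L)"
    unfolding sum_U by (intro Bochner_Integration.integrable_sum moments(1))
  show "integral\<^sup>L (M' L) (srs_sum L) = 0"
    unfolding sum_U using moments(1,2) by (simp add: Bochner_Integration.integral_sum)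
  show "(\<integral>\<omega>. (srs_sum L \<omega>)\<^sup>2 \<partial>M' L) = real (n * L) * (sqmean_srs - mean_srs\<^sup>2)"
    unfolding sum_U using expectation_square_sum_indep[OF _ indep moments(1,3,2)] moments(4)
    by simp
qed

lemma fhat_srs_eq:
  assumes "1 \<le> L"
  shows "fhat_srs K h (n * L) (Y L) x \<omega> = 1 / (real n * real L * h) * srs_sum L \<omega> + mean_srs / h"
  unfolding fhat_srs_def srs_sum_def kernel_def
  using assms n_pos h_pos by (simp add: sum_subtractf field_simps)

lemma expect_fhat_srs:
  assumes "1 \<le> L"
  shows "expect (M' L) (fhat_srs K h (n * L) (Y L) x) = mean_srs / h"
  unfolding fhat_srs_eq[OF assms, abs_def]
  by (rule prob_space.expect_var_affine_mean_zero[OF M'_prob srs_sum_moments(1,2)])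

lemma var_fhat_srs:
  assumes "1 \<le> L"
  shows "var (M' L) (fhat_srs K h (n * L) (Y L) x) = (sqmean_srs - mean_srs\<^sup>2) / (real n * real L * h\<^sup>2)"
  unfolding fhat_srs_eq[OF assms, abs_def]
    prob_space.expect_var_affine_mean_zero[OF M'_prob srs_sum_moments(1,2)] srs_sum_moments(3)
  using assms n_pos by (simp add: power2_eq_square)

lemma expect_fhat_pros_eq_srs:
  assumes "1 \<le> L"
  shows "expect (M L) (fhat_pros K h n L (X L) x) = expect (M' L) (fhat_srs K h (n * L) (Y L) x)"
  using expect_fhat_pros[OF assms] expect_fhat_srs[OF assms] by simp

lemma integral_scaled_kernel_pros_density:
  "(LINT t|lborel. (1 / h) * K ((x - t) / h) * pros_density f s n a j t) = mean_pros j / h"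
  unfolding mean_pros_def kernel_def by (simp add: ac_simps)

lemma integral_scaled_kernel_density:
  "(LINT t|lborel. (1 / h) * K ((x - t) / h) * f t) = mean_srs / h"
  unfolding mean_srs_def kernel_def by (simp add: ac_simps)

lemma var_fhat_pros_eq_srs:
  assumes "1 \<le> L"
  shows "var (M L) (fhat_pros K h n L (X L) x) =
    var (M' L) (fhat_srs K h (n * L) (Y L) x)
    - 1 / (real (n * L) * real n) * (\<Sum>j=1..n. (mean_pros j / h - mean_srs / h)\<^sup>2)"
proof -
  have dev: "(\<Sum>j=1..n. (mean_pros j / h - mean_srs / h)\<^sup>2)
      = ((\<Sum>j=1..n. (mean_pros j)\<^sup>2) - real n * mean_srs\<^sup>2) / h\<^sup>2"
    using sum_power2_diff_mean[of "\<lambda>j. mean_pros j / h" "{1..n}" "mean_srs / h"] sum_mean_pros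
    by (simp add: power_divide diff_divide_distrib flip: sum_divide_distrib)
  have rv: "row_variance = real n * sqmean_srs - (\<Sum>j=1..n. (mean_pros j)\<^sup>2)"
    unfolding row_variance_def sum_subtractf sum_sqmean_pros ..
  show ?thesis
    unfolding var_fhat_pros[OF assms] var_fhat_srs[OF assms] dev rv
    using assms n_pos h_pos by (simp add: field_simps power2_eq_square)
qed

definition centered_law :: "nat \<Rightarrow> real measure" where
  "centered_law j = distr (density lborel (\<lambda>t. ennreal (pros_density f s n a j t))) borel
     (\<lambda>t. kernel t - mean_pros j)"

lemma distr_pros_centered:
  assumes "j \<in> {1..n}" "i \<in> {1..L}"
  shows "distr (M L) borel (pros_centered L j i) = centered_law j"
proof -
  note D = X_distr[OF assms]
  have [measurable]: "X L j i \<in> measurable (M L) lborel" "X L j i \<in> borel_measurable (M L)"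
    using D unfolding distributed_def by simp_all
  have "distr (M L) borel (pros_centered L j i)
      = distr (distr (M L) lborel (X L j i)) borel (\<lambda>t. kernel t - mean_pros j)"
    unfolding pros_centered_def[abs_def] by (subst distr_distr) (simp_all add: comp_def)
  then show ?thesis
    unfolding distributed_distr_eq_density[OF D] centered_law_def .
qed

lemma char_pros_sum:
  "char (distr (M L) borel (pros_sum L)) u = (\<Prod>j=1..n. char (centered_law j) u) ^ L"
proof -
  interpret prob_space "M L" by (rule M_prob)
  have "char (distr (M L) borel (pros_sum L)) u
      = (\<Prod>p\<in>{1..n} \<times> {1..L}. char (distr (M L) borel (pros_centered L (fst p) (snd p))) u)"
    unfolding pros_sum_def[abs_def] by (rule char_distr_sum[OF indep_vars_pros_centered])
  also have "\<dots> = (\<Prod>p\<in>{1..n} \<times> {1..L}. char (centered_law (fst p)) u)"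
    by (rule prod.cong[OF refl]) (auto simp: distr_pros_centered)
  also have "\<dots> = (\<Prod>j=1..n. \<Prod>i=1..L. char (centered_law j) u)"
    by (subst prod.cartesian_product) (simp add: split_beta)
  finally show ?thesis by (simp add: prod_power_distrib)
qed

text \<open>For \<open>L = 0\<close> both sides vanish, the left one because \<open>0 / 0 = 0\<close>.\<close>

lemma standardized_fhat_pros:
  "(fhat_pros K h n L (X L) x \<omega> - expect (M L) (fhat_pros K h n L (X L) x))
      / sqrt (var (M L) (fhat_pros K h n L (X L) x))
    = pros_sum L \<omega> / sqrt (real L * row_variance)"
proof (cases "L = 0")
  case True
  then have "fhat_pros K h n L (X L) x = (\<lambda>_. 0)"
    by (simp add: fhat_pros_def fun_eq_iff)
  then show ?thesis using True by (simp add: expect_def pros_sum_def)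
next
  case False
  then have L: "1 \<le> L" by simp
  have "sqrt (var (M L) (fhat_pros K h n L (X L) x))
      = 1 / (real n * real L * h) * sqrt (real L * row_variance)"
    unfolding var_fhat_pros[OF L] using L n_pos h_pos
    by (simp add: real_sqrt_divide real_sqrt_mult field_simps)
  then show ?thesis
    unfolding fhat_pros_eq[OF L] expect_fhat_pros[OF L] using L n_pos h_pos by simp
qed

lemma row_variance_pos:
  assumes "\<forall>L\<ge>1. 0 < var (M L) (fhat_pros K h n L (X L) x)"
  shows "0 < row_variance"
proof -
  have "0 < var (M 1) (fhat_pros K h n 1 (X 1) x)" using assms by blast
  then have "0 < row_variance / ((real n)\<^sup>2 * h\<^sup>2)"
    by (simp add: var_fhat_pros)
  moreover have "0 < (real n)\<^sup>2 * h\<^sup>2" using n_pos h_pos by simp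
  ultimately show ?thesis by (simp add: zero_less_divide_iff)
qed

lemma fhat_pros_asymptotically_normal:
  assumes pos: "0 < row_variance"
  shows "weak_conv_m
    (\<lambda>L. distr (M L) borel
       (\<lambda>\<omega>. (fhat_pros K h n L (X L) x \<omega> - expect (M L) (fhat_pros K h n L (X L) x))
             / sqrt (var (M L) (fhat_pros K h n L (X L) x))))
    std_normal_distribution"
proof -
  interpret M1: prob_space "M 1" by (rule M_prob)
  define \<mu> where "\<mu> = distr (M 1) borel (pros_sum 1)"
  have [measurable]: "pros_sum L \<in> borel_measurable (M L)" for L
    using pros_sum_moments(1) by (rule borel_measurable_integrable)
  have "weak_conv_m (\<lambda>L. distr (M L) borel (\<lambda>\<omega>. pros_sum L \<omega> / sqrt (real L * row_variance)))
      std_normal_distribution"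
  proof (rule central_limit_theorem_char_power[where \<sigma> = "sqrt row_variance"])
    show "real_distribution \<mu>"
      unfolding \<mu>_def by (rule M1.real_distribution_distr) simp
    show "integrable \<mu> (\<lambda>x. x)" "(\<integral>x. x \<partial>\<mu>) = 0"
      "integrable \<mu> (\<lambda>x. x\<^sup>2)" "(\<integral>x. x\<^sup>2 \<partial>\<mu>) = (sqrt row_variance)\<^sup>2"
      unfolding \<mu>_def using pros_sum_moments[of 1] pos
      by (simp_all add: integrable_distr_eq integral_distr)
    show "0 < sqrt row_variance" using pos by simp
    show "real_distribution (distr (M L) borel (\<lambda>\<omega>. pros_sum L \<omega> / sqrt (real L * row_variance)))"
      for L
      by (rule prob_space.real_distribution_distr[OF M_prob]) simp
    show "char (distr (M L) borel (\<lambda>\<omega>. pros_sum L \<omega> / sqrt (real L * row_variance))) t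
        = char \<mu> (t / sqrt (real L * (sqrt row_variance)\<^sup>2)) ^ L" for L t
      unfolding \<mu>_def using pos by (simp add: char_distr_divide char_pros_sum)
  qed
  then show ?thesis by (simp only: standardized_fhat_pros)
qed

end

theorem theorem3p1:
  fixes f K :: "real \<Rightarrow> real"
    and s n :: nat and a :: "nat \<Rightarrow> nat \<Rightarrow> real"
    and h x :: real
    and M :: "nat \<Rightarrow> 'a measure" and X :: "nat \<Rightarrow> nat \<Rightarrow> nat \<Rightarrow> 'a \<Rightarrow> real"
    and M' :: "nat \<Rightarrow> 'b measure" and Y :: "nat \<Rightarrow> nat \<Rightarrow> 'b \<Rightarrow> real"
  assumes f_meas: "f \<in> borel_measurable lborel"
    and f_nonneg: "\<And>t. 0 \<le> f t"
    and f_int: "integrable lborel f"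
    and f_one: "(LINT t|lborel. f t) = 1"
    and s_pos: "0 < s" and n_pos: "0 < n" and n_dvd: "n dvd s"
    and alpha: "doubly_stochastic n a"
    and K_int: "integrable lborel K"
    and K_one: "(LINT t|lborel. K t) = 1"
    and K_sym: "\<And>t. K (- t) = K t"
    and K_sq: "integrable lborel (\<lambda>t. (K t)\<^sup>2)"
    and K_mom2: "integrable lborel (\<lambda>t. t\<^sup>2 * K t)"
    and h_pos: "0 < h"
    and var_fin: "integrable lborel (\<lambda>t. (K ((x - t) / h))\<^sup>2 * f t)"
    and M_prob: "\<And>L. prob_space (M L)"
    and X_indep: "\<And>L. prob_space.indep_vars (M L) (\<lambda>_. borel) (\<lambda>(j, i). X L j i) ({1..n} \<times> {1..L})"
    and X_distr: "\<And>L j i. j \<in> {1..n} \<Longrightarrow> i \<in> {1..L} \<Longrightarrow>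
        distributed (M L) lborel (X L j i) (\<lambda>t. ennreal (pros_density f s n a j t))"
    and M'_prob: "\<And>L. prob_space (M' L)"
    and Y_indep: "\<And>L. prob_space.indep_vars (M' L) (\<lambda>_. borel) (Y L) {1..n * L}"
    and Y_distr: "\<And>L k. k \<in> {1..n * L} \<Longrightarrow> distributed (M' L) lborel (Y L k) (\<lambda>t. ennreal (f t))"
  shows
    "(\<forall>L\<ge>1.
        expect (M L) (fhat_pros K h n L (X L) x) = expect (M' L) (fhat_srs K h (n * L) (Y L) x)) \<and>
     (\<forall>L\<ge>1.
        var (M L) (fhat_pros K h n L (X L) x) =
          var (M' L) (fhat_srs K h (n * L) (Y L) x)
          - 1 / (real (n * L) * real n) *
            (\<Sum>j=1..n. ((LINT t|lborel. (1 / h) * K ((x - t) / h) * pros_density f s n a j t)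
                        - (LINT t|lborel. (1 / h) * K ((x - t) / h) * f t))\<^sup>2)) \<and>
     ((\<forall>L\<ge>1. 0 < var (M L) (fhat_pros K h n L (X L) x)) \<longrightarrow>
        weak_conv_m
          (\<lambda>L. distr (M L) borel
             (\<lambda>\<omega>. (fhat_pros K h n L (X L) x \<omega> - expect (M L) (fhat_pros K h n L (X L) x))
                   / sqrt (var (M L) (fhat_pros K h n L (X L) x))))
          std_normal_distribution)"
proof -
  interpret pros_kde f s n a K h x M X M' Y
    by (intro pros_kde.intro pros_densities.intro pros_kde_axioms.intro) (fact assms)+
  show ?thesis
    unfolding integral_scaled_kernel_pros_density integral_scaled_kernel_density
    by (intro conjI allI impI expect_fhat_pros_eq_srs var_fhat_pros_eq_srs
        fhat_pros_asymptotically_normal row_variance_pos) blast+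
qed

end
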